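(* Let $p\ge3$ be an integer. In $L^2(-1,1)$ with its standard inner product, the orthogonal complement of $(1-x^2)\mathbf P^{p-3}$ inside $\mathbf P^p$ is $$\{(1-x^2)\mathbf P^{p-3}\}^\perp\cap\mathbf P^p=\mathrm{Span}\{L_p,\,L_p',\,L_{p-1}'\}.$$
   Context: $\mathbf P^q$ denotes the real polynomials of degree at most $q$ on $[-1,1]$, and $(1-x^2)\mathbf P^{p-3}=\{(1-x^2)q: q\in\mathbf P^{p-3}\}$. $L_m$ are the Legendre polynomials ($L_0=1$, $L_1=x$, $(m+1)L_{m+1}=(2m+1)xL_m-mL_{m-1}$) and $L_m'$ their derivatives. *)

theory Defs
  imports "HOL-Analysis.Analysis" "HOL-Computational_Algebra.Polynomial"
begin

fun legendre :: "nat \<Rightarrow> real poly" where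
  "legendre 0 = 1"
| "legendre (Suc 0) = [:0, 1:]"
| "legendre (Suc (Suc m)) =
     smult (1 / (real m + 2))
       (smult (2 * real m + 3) ([:0, 1:] * legendre (Suc m)) - smult (real m + 1) (legendre m))"

definition L2_inner :: "real poly \<Rightarrow> real poly \<Rightarrow> real" where
  "L2_inner f g = integral {-1..1} (\<lambda>x. poly f x * poly g x)"

end

theory Submission
  imports Defs
begin

text \<open>The Legendre operator \<open>A f = ((1 - x\<^sup>2) f')'\<close> is symmetric on polynomials, since its
  weight vanishes at \<open>\<plusminus>1\<close>, and \<open>A L\<^sub>n = -n(n+1) L\<^sub>n\<close>; comparing eigenvalues on monomials
  shows that \<open>L\<^sub>n\<close> is orthogonal to \<open>\<P>\<^sup>n\<^sup>-\<^sup>1\<close>. Integrating by parts against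
  \<open>(1 - x\<^sup>2) q\<close> then makes \<open>L\<^sub>p'\<close> and \<open>L\<^sub>p\<^sub>-\<^sub>1'\<close> orthogonal to \<open>(1 - x\<^sup>2)\<P>\<^sup>p\<^sup>-\<^sup>3\<close>, as is \<open>L\<^sub>p\<close>.
  Conversely, subtracting suitable multiples of \<open>L\<^sub>p, L\<^sub>p', L\<^sub>p\<^sub>-\<^sub>1'\<close> (of exact degrees
  \<open>p, p-1, p-2\<close>) from an orthogonal \<open>f \<in> \<P>\<^sup>p\<close> leaves a remainder \<open>r \<in> \<P>\<^sup>p\<^sup>-\<^sup>3\<close> with
  \<open>\<integral> (1 - x\<^sup>2) r\<^sup>2 = 0\<close>, hence \<open>r = 0\<close>.\<close>

lemma integrable_poly_product:
  "(\<lambda>x. poly f x * poly g x :: real) integrable_on {a..b}"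
  by (intro integrable_continuous_interval continuous_intros)

lemma L2_inner_commute: "L2_inner f g = L2_inner g f"
  unfolding L2_inner_def by (simp add: mult.commute)

lemma L2_inner_add_left: "L2_inner (f + g) h = L2_inner f h + L2_inner g h"
  unfolding L2_inner_def
  by (simp add: distrib_right integral_add integrable_poly_product)

lemma L2_inner_smult_left: "L2_inner (smult a f) g = a * L2_inner f g"
  unfolding L2_inner_def by (simp add: mult.assoc)

lemma L2_inner_diff_left: "L2_inner (f - g) h = L2_inner f h - L2_inner g h"
  using L2_inner_add_left[of f "- g" h] L2_inner_smult_left[of "- 1" g h] by simp

lemma L2_inner_add_right: "L2_inner h (f + g) = L2_inner h f + L2_inner h g"
  by (metis L2_inner_add_left L2_inner_commute)

lemma L2_inner_smult_right: "L2_inner f (smult a g) = a * L2_inner f g"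
  by (metis L2_inner_smult_left L2_inner_commute)

lemma L2_inner_diff_right: "L2_inner h (f - g) = L2_inner h f - L2_inner h g"
  by (metis L2_inner_diff_left L2_inner_commute)

lemma L2_inner_sum_right:
  "finite I \<Longrightarrow> L2_inner h (\<Sum>i\<in>I. f i) = (\<Sum>i\<in>I. L2_inner h (f i))"
  by (induction I rule: finite_induct) (simp_all add: L2_inner_add_right, simp add: L2_inner_def)

lemma L2_inner_eq_L2_inner_1_mult: "L2_inner f g = L2_inner 1 (f * g)"
  unfolding L2_inner_def by simp

lemma L2_inner_1_pderiv: "L2_inner 1 (pderiv h) = poly h 1 - poly h (- 1)"
proof -
  have "(poly h has_vector_derivative poly (pderiv h) x) (at x within {-1..1})" for x
    by (simp add: has_real_derivative_iff_has_vector_derivative[symmetric]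
        has_field_derivative_at_within poly_DERIV)
  then have "(poly (pderiv h) has_integral poly h 1 - poly h (- 1)) {-1..1}"
    by (intro fundamental_theorem_of_calculus) auto
  then show ?thesis unfolding L2_inner_def by (simp add: integral_unique)
qed

definition legendre_weight :: "real poly" where
  "legendre_weight = [:1, 0, -1:]"

definition legendre_op :: "real poly \<Rightarrow> real poly" where
  "legendre_op f = pderiv (legendre_weight * pderiv f)"

lemma poly_legendre_weight: "poly legendre_weight x = 1 - x\<^sup>2"
  by (simp add: legendre_weight_def power2_eq_square)

lemma degree_legendre_weight_mult: "degree (legendre_weight * q) \<le> degree q + 2"
  using degree_mult_le[of legendre_weight q] by (simp add: legendre_weight_def)

lemma L2_inner_1_pderiv_weight_mult: "L2_inner 1 (pderiv (legendre_weight * h)) = 0"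
  by (simp add: L2_inner_1_pderiv poly_legendre_weight)

lemma L2_inner_pderiv_weight_mult:
  "L2_inner (pderiv f) (legendre_weight * q) = - L2_inner f (pderiv (legendre_weight * q))"
proof -
  have "0 = L2_inner 1 (pderiv (legendre_weight * (q * f)))"
    by (rule L2_inner_1_pderiv_weight_mult[symmetric])
  also have "legendre_weight * (q * f) = f * (legendre_weight * q)"
    by (simp add: algebra_simps)
  also have "L2_inner 1 (pderiv \<dots>) =
      L2_inner f (pderiv (legendre_weight * q)) + L2_inner (pderiv f) (legendre_weight * q)"
    by (simp add: pderiv_mult L2_inner_add_right L2_inner_eq_L2_inner_1_mult[symmetric]
        L2_inner_commute[of "legendre_weight * q"] del: mult_1)
  finally show ?thesis by simp
qed

lemma L2_inner_legendre_op_commute: "L2_inner (legendre_op f) g = L2_inner f (legendre_op g)"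
proof -
  have "legendre_op f * g - f * legendre_op g
      = pderiv (legendre_weight * (pderiv f * g - f * pderiv g))"
    unfolding legendre_op_def by (simp add: pderiv_mult pderiv_diff algebra_simps)
  then have "L2_inner 1 (legendre_op f * g - f * legendre_op g) = 0"
    by (simp add: L2_inner_1_pderiv_weight_mult)
  then show ?thesis
    by (simp add: L2_inner_diff_right L2_inner_eq_L2_inner_1_mult[of _ g]
        L2_inner_eq_L2_inner_1_mult[of f])
qed

lemma legendre_op_monom:
  "legendre_op (monom 1 k) = monom (real k * (real k - 1)) (k - 2) - monom (real k * (real k + 1)) k"
proof (cases k)
  case 0
  then show ?thesis by (simp add: legendre_op_def pderiv_monom)
next
  case (Suc j)
  have "legendre_weight * monom (real k) j = monom (real k) j - monom (real k) (j + 2)"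
    by (simp add: poly_eq_poly_eq_iff[symmetric] fun_eq_iff poly_legendre_weight poly_monom
        algebra_simps power2_eq_square)
  then have "legendre_op (monom 1 k) = monom (real j * real k) (j - 1) - monom (real (j + 2) * real k) (j + 1)"
    using Suc by (simp add: legendre_op_def pderiv_monom pderiv_diff del: of_nat_add)
  moreover have "real j * real k = real k * (real k - 1)" "real (j + 2) * real k = real k * (real k + 1)"
    "j - 1 = k - 2" "j + 1 = k"
    using Suc by (simp_all add: algebra_simps)
  ultimately show ?thesis by simp
qed

lemma legendre_Suc_Suc_smult:
  "smult (real n + 2) (legendre (Suc (Suc n))) =
   smult (2 * real n + 3) ([:0, 1:] * legendre (Suc n)) - smult (real n + 1) (legendre n)"
  by (simp add: add.commute)

lemma poly_legendre_Suc_Suc: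
  "(real n + 2) * poly (legendre (Suc (Suc n))) x =
   (2 * real n + 3) * x * poly (legendre (Suc n)) x - (real n + 1) * poly (legendre n) x"
  using arg_cong[OF legendre_Suc_Suc_smult[of n], of "\<lambda>p. poly p x"] by simp

lemma poly_pderiv_legendre_Suc_Suc:
  "(real n + 2) * poly (pderiv (legendre (Suc (Suc n)))) x =
   (2 * real n + 3) * (poly (legendre (Suc n)) x + x * poly (pderiv (legendre (Suc n))) x)
   - (real n + 1) * poly (pderiv (legendre n)) x"
  using arg_cong[OF legendre_Suc_Suc_smult[of n], of "\<lambda>p. poly (pderiv p) x"]
  by (simp del: legendre.simps add: pderiv_smult pderiv_diff pderiv_mult pderiv_pCons algebra_simps)

lemma poly_pderiv_legendre_identities:
  "(\<forall>x. poly (pderiv (legendre (Suc n))) x =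
      x * poly (pderiv (legendre n)) x + (real n + 1) * poly (legendre n) x) \<and>
   (\<forall>x. x * poly (pderiv (legendre (Suc n))) x - poly (pderiv (legendre n)) x =
      (real n + 1) * poly (legendre (Suc n)) x)"
proof (induction n)
  case 0
  then show ?case by (simp add: pderiv_pCons)
next
  case (Suc n)
  then have IH1: "poly (pderiv (legendre (Suc n))) x =
      x * poly (pderiv (legendre n)) x + (real n + 1) * poly (legendre n) x"
    and IH2: "x * poly (pderiv (legendre (Suc n))) x - poly (pderiv (legendre n)) x =
      (real n + 1) * poly (legendre (Suc n)) x" for x
    by blast+
  have deriv: "poly (pderiv (legendre (Suc (Suc n)))) x =
      x * poly (pderiv (legendre (Suc n))) x + (real (Suc n) + 1) * poly (legendre (Suc n)) x" for x
  proof -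
    have "(real n + 2) * poly (pderiv (legendre (Suc (Suc n)))) x =
        (real n + 2) * (x * poly (pderiv (legendre (Suc n))) x + (real (Suc n) + 1) * poly (legendre (Suc n)) x)"
      using poly_pderiv_legendre_Suc_Suc[of n x] IH1[of x] IH2[of x]
      by (simp del: legendre.simps add: algebra_simps) algebra
    then show ?thesis by simp
  qed
  moreover have "x * poly (pderiv (legendre (Suc (Suc n)))) x - poly (pderiv (legendre (Suc n))) x =
      (real (Suc n) + 1) * poly (legendre (Suc (Suc n))) x" for x
    using deriv[of x] IH1[of x] IH2[of x] poly_legendre_Suc_Suc[of n x]
    by (simp del: legendre.simps add: algebra_simps) algebra
  ultimately show ?case by blast
qed

lemma poly_pderiv_legendre_Suc:
  "poly (pderiv (legendre (Suc n))) x =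
   x * poly (pderiv (legendre n)) x + (real n + 1) * poly (legendre n) x"
  using poly_pderiv_legendre_identities by blast

lemma poly_X_pderiv_legendre_Suc:
  "x * poly (pderiv (legendre (Suc n))) x - poly (pderiv (legendre n)) x =
   (real n + 1) * poly (legendre (Suc n)) x"
  using poly_pderiv_legendre_identities by blast

lemma legendre_weight_mult_pderiv_legendre_Suc:
  "legendre_weight * pderiv (legendre (Suc n)) =
   smult (real n + 1) (legendre n - [:0, 1:] * legendre (Suc n))"
proof -
  have "poly (legendre_weight * pderiv (legendre (Suc n))) x =
      poly (smult (real n + 1) (legendre n - [:0, 1:] * legendre (Suc n))) x" for x
    using poly_pderiv_legendre_Suc[of n x] poly_X_pderiv_legendre_Suc[of x n]
    by (simp del: legendre.simps add: poly_legendre_weight algebra_simps power2_eq_square) algebra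
  then show ?thesis by (simp add: poly_eq_poly_eq_iff[symmetric] fun_eq_iff del: legendre.simps)
qed

lemma legendre_op_legendre:
  "legendre_op (legendre n) = smult (- (real n * (real n + 1))) (legendre n)"
proof (cases n)
  case 0
  then show ?thesis by (simp add: legendre_op_def)
next
  case (Suc m)
  have "poly (legendre_op (legendre (Suc m))) x =
      poly (smult (- (real (Suc m) * (real (Suc m) + 1))) (legendre (Suc m))) x" for x
    using poly_X_pderiv_legendre_Suc[of x m]
    by (simp del: legendre.simps add: legendre_op_def legendre_weight_mult_pderiv_legendre_Suc
        pderiv_smult pderiv_diff pderiv_mult pderiv_pCons algebra_simps)
  then show ?thesis
    using Suc by (simp add: poly_eq_poly_eq_iff[symmetric] fun_eq_iff del: legendre.simps)
qed

lemma monom_eq_smult_monom_1: "monom (c :: real) k = smult c (monom 1 k)"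
  by (simp add: smult_monom)

text \<open>Self-adjointness turns the eigenvalue equation into
  \<open>n(n+1) \<langle>L\<^sub>n, x\<^sup>k\<rangle> = k(k+1) \<langle>L\<^sub>n, x\<^sup>k\<rangle> - k(k-1) \<langle>L\<^sub>n, x\<^sup>k\<^sup>-\<^sup>2\<rangle>\<close>,
  so the moments vanish by induction on \<open>k\<close>.\<close>

lemma L2_inner_legendre_monom: "k < n \<Longrightarrow> L2_inner (legendre n) (monom 1 k) = 0"
proof (induction k rule: less_induct)
  case (less k)
  define M where "M j = L2_inner (legendre n) (monom 1 j)" for j
  have lower: "real k * (real k - 1) * M (k - 2) = 0"
    using less by (cases "k < 2") (auto simp: M_def less_Suc_eq)
  have "- (real n * (real n + 1) * M k) = L2_inner (legendre n) (legendre_op (monom 1 k))"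
    unfolding L2_inner_legendre_op_commute[symmetric] legendre_op_legendre L2_inner_smult_left M_def
    by simp
  also have "\<dots> = real k * (real k - 1) * M (k - 2) - real k * (real k + 1) * M k"
    unfolding legendre_op_monom L2_inner_diff_right M_def
    by (subst (1 2) monom_eq_smult_monom_1) (simp add: L2_inner_smult_right)
  finally have "(real n * (real n + 1) - real k * (real k + 1)) * M k = 0"
    unfolding left_diff_distrib using lower by linarith
  moreover have "real k * (real k + 1) < real n * (real n + 1)"
    using less.prems by (intro mult_strict_mono) auto
  ultimately show ?case by (simp add: M_def)
qed

lemma L2_inner_legendre_eq_0:
  assumes "degree g < n"
  shows "L2_inner (legendre n) g = 0"
proof -
  have "L2_inner (legendre n) g = L2_inner (legendre n) (\<Sum>i\<le>degree g. smult (coeff g i) (monom 1 i))"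
    by (simp add: smult_monom poly_as_sum_of_monoms)
  also have "\<dots> = (\<Sum>i\<le>degree g. coeff g i * L2_inner (legendre n) (monom 1 i))"
    by (simp add: L2_inner_sum_right L2_inner_smult_right)
  also have "\<dots> = 0"
    using assms by (simp add: L2_inner_legendre_monom)
  finally show ?thesis .
qed

lemma L2_inner_legendre_weight_mult:
  "degree q + 2 < n \<Longrightarrow> L2_inner (legendre n) (legendre_weight * q) = 0"
  using degree_legendre_weight_mult[of q] by (intro L2_inner_legendre_eq_0) simp

lemma L2_inner_pderiv_legendre_weight_mult:
  "degree q + 2 \<le> n \<Longrightarrow> L2_inner (pderiv (legendre n)) (legendre_weight * q) = 0"
  using degree_legendre_weight_mult[of q]
  by (simp add: L2_inner_pderiv_weight_mult L2_inner_legendre_eq_0 degree_pderiv)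

lemma degree_legendre_le_and_coeff_pos: "degree (legendre n) \<le> n \<and> coeff (legendre n) n > 0"
proof (induction n rule: legendre.induct)
  case (3 m)
  let ?X = "[:0, 1 :: real:]"
  have "degree (?X * legendre (Suc m)) \<le> Suc (Suc m)"
    using degree_mult_le[of ?X "legendre (Suc m)"] 3 by simp
  moreover have "degree (legendre m) \<le> Suc (Suc m)"
    using 3 by simp
  ultimately have "degree (legendre (Suc (Suc m))) \<le> Suc (Suc m)"
    unfolding legendre.simps(3)
    by (meson degree_diff_le degree_smult_le order.trans)
  moreover have "coeff (legendre (Suc (Suc m))) (Suc (Suc m)) =
      (2 * real m + 3) / (real m + 2) * coeff (legendre (Suc m)) (Suc m)"
    using 3 by (simp add: coeff_eq_0)
  ultimately show ?case
    using 3 by simp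
qed simp_all

lemma degree_legendre: "degree (legendre n) = n"
  using degree_legendre_le_and_coeff_pos[of n] le_degree[of "legendre n" n] by simp

lemma coeff_legendre_degree_pos: "coeff (legendre n) n > 0"
  using degree_legendre_le_and_coeff_pos by blast

lemma degree_pderiv_legendre: "degree (pderiv (legendre n)) = n - 1"
  by (simp add: degree_pderiv degree_legendre)

lemma coeff_pderiv_legendre_degree:
  "0 < n \<Longrightarrow> coeff (pderiv (legendre n)) (n - 1) \<noteq> 0"
  using coeff_legendre_degree_pos[of n] by (simp add: coeff_pderiv)

lemma L2_inner_legendre_weight_self_eq_0_iff:
  "L2_inner r (legendre_weight * r) = 0 \<longleftrightarrow> r = 0"
proof
  assume "L2_inner r (legendre_weight * r) = 0"
  then have integral: "((\<lambda>x. (1 - x\<^sup>2) * (poly r x)\<^sup>2) has_integral 0) (cbox (- 1) 1)"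
    using integrable_poly_product[of r "legendre_weight * r" "- 1" 1]
    unfolding L2_inner_def
    by (metis (no_types, lifting) cbox_interval has_integral_cong has_integral_integral
        mult.left_commute poly_legendre_weight poly_mult power2_eq_square)
  have continuous: "continuous_on (cbox (- 1) 1) (\<lambda>x. (1 - x\<^sup>2) * (poly r x)\<^sup>2)"
    by (intro continuous_intros)
  have nonneg: "0 \<le> (1 - x\<^sup>2) * (poly r x)\<^sup>2" if "x \<in> box (- 1) 1" for x
    using that by (simp add: abs_square_le_1 abs_le_iff)
  have "poly r x = 0" if "x \<in> {-1<..<1}" for x
  proof -
    have "0 < 1 - x\<^sup>2"
      using that by (simp add: abs_square_less_1 abs_less_iff)
    moreover have "(1 - x\<^sup>2) * (poly r x)\<^sup>2 = 0"
      using has_integral_0_cbox_imp_0[OF continuous nonneg integral] that by auto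
    ultimately show ?thesis by simp
  qed
  then have "{-1<..<1} \<subseteq> {x. poly r x = 0}"
    by blast
  moreover have "infinite {-1<..<(1 :: real)}"
    by simp
  ultimately show "r = 0"
    using poly_roots_finite finite_subset by blast
next
  show "r = 0 \<Longrightarrow> L2_inner r (legendre_weight * r) = 0"
    by (simp add: L2_inner_def)
qed

lemma degree_diff_smult_cancel_coeff:
  fixes g h :: "'a :: field poly"
  assumes "degree g \<le> n" "degree h \<le> n" "coeff h n \<noteq> 0"
  shows "degree (g - smult (coeff g n / coeff h n) h) \<le> n - 1"
proof (rule degree_le, intro allI impI)
  let ?d = "g - smult (coeff g n / coeff h n) h"
  fix i assume "n - 1 < i"
  moreover have "degree ?d \<le> n"
    using assms by (meson degree_diff_le degree_smult_le order.trans)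
  ultimately consider "i = n" | "degree ?d < i"
    by linarith
  then show "coeff ?d i = 0"
    by cases (simp add: assms(3), rule coeff_eq_0)
qed

lemma legendre_decomposition:
  assumes "degree f \<le> p" "2 \<le> p"
  obtains a b c where
    "degree (f - smult a (legendre p) - smult b (pderiv (legendre p))
       - smult c (pderiv (legendre (p - 1)))) \<le> p - 3"
proof -
  define f1 where "f1 = f - smult (coeff f p / coeff (legendre p) p) (legendre p)"
  have "degree f1 \<le> p - 1"
    unfolding f1_def using assms coeff_legendre_degree_pos[of p]
    by (intro degree_diff_smult_cancel_coeff) (simp_all add: degree_legendre)
  define f2 where "f2 = f1 - smult (coeff f1 (p - 1) / coeff (pderiv (legendre p)) (p - 1))
      (pderiv (legendre p))"
  have "degree f2 \<le> p - 1 - 1"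
    unfolding f2_def using \<open>degree f1 \<le> p - 1\<close> assms coeff_pderiv_legendre_degree[of p]
    by (intro degree_diff_smult_cancel_coeff) (simp_all add: degree_pderiv_legendre)
  define f3 where "f3 = f2 - smult (coeff f2 (p - 1 - 1) / coeff (pderiv (legendre (p - 1))) (p - 1 - 1))
      (pderiv (legendre (p - 1)))"
  have "degree f3 \<le> p - 1 - 1 - 1"
    unfolding f3_def using \<open>degree f2 \<le> p - 1 - 1\<close> assms coeff_pderiv_legendre_degree[of "p - 1"]
    by (intro degree_diff_smult_cancel_coeff) (simp_all add: degree_pderiv_legendre)
  then show ?thesis
    by (intro that) (simp add: f3_def f2_def f1_def numeral_3_eq_3)
qed

lemma L2_inner_legendre_span_weight_mult:
  assumes "degree q \<le> p - 3" "3 \<le> p"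
  shows "L2_inner (smult a (legendre p) + smult b (pderiv (legendre p))
           + smult c (pderiv (legendre (p - 1)))) (legendre_weight * q) = 0"
  using assms
  by (simp add: L2_inner_add_left L2_inner_smult_left L2_inner_legendre_weight_mult
      L2_inner_pderiv_legendre_weight_mult)

lemma degree_legendre_span:
  "degree (smult a (legendre p) + smult b (pderiv (legendre p))
     + smult c (pderiv (legendre (p - 1)))) \<le> p"
  by (intro degree_add_le order.trans[OF degree_smult_le])
     (simp_all add: degree_legendre degree_pderiv_legendre)

theorem lemma12:
  fixes p :: nat
  assumes "p \<ge> 3"
  shows "{f :: real poly. degree f \<le> p \<and>
            (\<forall>q :: real poly. degree q \<le> p - 3 \<longrightarrow> L2_inner f ([:1, 0, -1:] * q) = 0)}
       = {smult a (legendre p) + smult b (pderiv (legendre p)) + smult c (pderiv (legendre (p - 1)))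
            | a b c :: real. True}"
    (is "{f. degree f \<le> p \<and> ?orth f} = {?span a b c | a b c. True}")
proof -
  have weight: "[:1, 0, -1:] = legendre_weight"
    by (simp add: legendre_weight_def)
  have "\<exists>a b c. f = ?span a b c" if "degree f \<le> p" "?orth f" for f
  proof -
    obtain a b c where rest: "degree (f - ?span a b c) \<le> p - 3"
      using legendre_decomposition[OF \<open>degree f \<le> p\<close>] assms by (auto simp: algebra_simps)
    then have "L2_inner (f - ?span a b c) (legendre_weight * (f - ?span a b c)) = 0"
      using that L2_inner_legendre_span_weight_mult[OF rest assms]
      by (simp add: weight L2_inner_diff_left)
    then show ?thesis
      by (auto simp: L2_inner_legendre_weight_self_eq_0_iff)
  qed
  moreover have "?orth (?span a b c)" for a b c
    using L2_inner_legendre_span_weight_mult[OF _ assms] by (simp only: weight) blast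
  ultimately show ?thesis
    using degree_legendre_span by blast
qed

end
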